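(* Let $\varphi$ be a quantifier-free first-order formula in the language $\sigma^{bdo}_=$, and let $\varphi^{\circ}$ be the $\sigma^{bdbo}_=$-formula obtained from $\varphi$ by replacing every term of the form $\Diamond t$ by $t\circ 1$. Then $\varphi$ is satisfiable in some bdo if and only if $\varphi^{\circ}$ is satisfiable in some bdbo.
   Context: A bdo is an algebra $\langle A,\wedge,\vee,\Diamond,0,1,\leqslant\rangle$ where $\langle A,\wedge,\vee,0,1\rangle$ is a bounded distributive lattice with natural order $\leqslant$ and $\Diamond$ is unary with $\Diamond0=0$ and $\Diamond(x\vee y)=\Diamond x\vee\Diamond y$; $\sigma^{bdo}_=$ is its language with equality. A bdbo is an algebra $\langle A,\wedge,\vee,\circ,0,1,\leqslant\rangle$ where $\langle A,\wedge,\vee,0,1\rangle$ is a bounded distributive lattice with natural order $\leqslant$ and $\circ$ is binary with $x\circ0=0=0\circ x$, $x\circ(y\vee z)=(x\circ y)\vee(x\circ z)$, $(y\vee z)\circ x=(y\circ x)\vee(z\circ x)$; $\sigma^{bdbo}_=$ is its language with equality. A quantifier-free first-order formula is a Boolean combination of atomic formulas $s=t$, $s\leqslant t$; it is satisfiable in an algebra if true there under some valuation. *)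

theory Defs
  imports Main
begin

datatype 'v bdo_trm = BVar 'v | BMeet "'v bdo_trm" "'v bdo_trm" | BJoin "'v bdo_trm" "'v bdo_trm"
  | BDia "'v bdo_trm" | BZero | BOne

datatype 'v bdbo_trm = CVar 'v | CMeet "'v bdbo_trm" "'v bdbo_trm" | CJoin "'v bdbo_trm" "'v bdbo_trm"
  | CCirc "'v bdbo_trm" "'v bdbo_trm" | CZero | COne

datatype 't qf = FEq 't 't | FLe 't 't | FNot "'t qf" | FAnd "'t qf" "'t qf" | FOr "'t qf" "'t qf"

fun trans_trm :: "'v bdo_trm \<Rightarrow> 'v bdbo_trm" where
  "trans_trm (BVar x) = CVar x"
| "trans_trm (BMeet s t) = CMeet (trans_trm s) (trans_trm t)"
| "trans_trm (BJoin s t) = CJoin (trans_trm s) (trans_trm t)"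
| "trans_trm (BDia t) = CCirc (trans_trm t) COne"
| "trans_trm BZero = CZero"
| "trans_trm BOne = COne"

fun map_qf :: "('s \<Rightarrow> 't) \<Rightarrow> 's qf \<Rightarrow> 't qf" where
  "map_qf f (FEq s t) = FEq (f s) (f t)"
| "map_qf f (FLe s t) = FLe (f s) (f t)"
| "map_qf f (FNot p) = FNot (map_qf f p)"
| "map_qf f (FAnd p q) = FAnd (map_qf f p) (map_qf f q)"
| "map_qf f (FOr p q) = FOr (map_qf f p) (map_qf f q)"

definition trans_fm :: "'v bdo_trm qf \<Rightarrow> 'v bdbo_trm qf" where
  "trans_fm = map_qf trans_trm"

record 'a bdl =
  carrier :: "'a set"
  meet :: "'a \<Rightarrow> 'a \<Rightarrow> 'a"
  join :: "'a \<Rightarrow> 'a \<Rightarrow> 'a"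
  zero :: 'a
  one :: 'a

record 'a bdo_alg = "'a bdl" + dia :: "'a \<Rightarrow> 'a"
record 'a bdbo_alg = "'a bdl" + circ :: "'a \<Rightarrow> 'a \<Rightarrow> 'a"

definition lle :: "('a, 'b) bdl_scheme \<Rightarrow> 'a \<Rightarrow> 'a \<Rightarrow> bool" where
  "lle L x y \<longleftrightarrow> join L x y = y"

definition is_bdl :: "('a, 'b) bdl_scheme \<Rightarrow> bool" where
  "is_bdl L \<longleftrightarrow>
     zero L \<in> carrier L \<and> one L \<in> carrier L \<and>
     (\<forall>x\<in>carrier L. \<forall>y\<in>carrier L. meet L x y \<in> carrier L \<and> join L x y \<in> carrier L) \<and>
     (\<forall>x\<in>carrier L. \<forall>y\<in>carrier L.
        meet L x y = meet L y x \<and> join L x y = join L y x \<and>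
        meet L x (join L x y) = x \<and> join L x (meet L x y) = x) \<and>
     (\<forall>x\<in>carrier L. \<forall>y\<in>carrier L. \<forall>z\<in>carrier L.
        meet L x (meet L y z) = meet L (meet L x y) z \<and>
        join L x (join L y z) = join L (join L x y) z \<and>
        meet L x (join L y z) = join L (meet L x y) (meet L x z)) \<and>
     (\<forall>x\<in>carrier L. join L (zero L) x = x \<and> meet L (one L) x = x)"

definition is_bdo :: "'a bdo_alg \<Rightarrow> bool" where
  "is_bdo A \<longleftrightarrow> is_bdl A \<and>
     (\<forall>x\<in>carrier A. dia A x \<in> carrier A) \<and>
     dia A (zero A) = zero A \<and>
     (\<forall>x\<in>carrier A. \<forall>y\<in>carrier A. dia A (join A x y) = join A (dia A x) (dia A y))"

definition is_bdbo :: "'a bdbo_alg \<Rightarrow> bool" where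
  "is_bdbo B \<longleftrightarrow> is_bdl B \<and>
     (\<forall>x\<in>carrier B. \<forall>y\<in>carrier B. circ B x y \<in> carrier B) \<and>
     (\<forall>x\<in>carrier B. circ B x (zero B) = zero B \<and> circ B (zero B) x = zero B) \<and>
     (\<forall>x\<in>carrier B. \<forall>y\<in>carrier B. \<forall>z\<in>carrier B.
        circ B x (join B y z) = join B (circ B x y) (circ B x z) \<and>
        circ B (join B y z) x = join B (circ B y x) (circ B z x))"

fun eval_bdo :: "'a bdo_alg \<Rightarrow> ('v \<Rightarrow> 'a) \<Rightarrow> 'v bdo_trm \<Rightarrow> 'a" where
  "eval_bdo A v (BVar x) = v x"
| "eval_bdo A v (BMeet s t) = meet A (eval_bdo A v s) (eval_bdo A v t)"
| "eval_bdo A v (BJoin s t) = join A (eval_bdo A v s) (eval_bdo A v t)"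
| "eval_bdo A v (BDia t) = dia A (eval_bdo A v t)"
| "eval_bdo A v BZero = zero A"
| "eval_bdo A v BOne = one A"

fun eval_bdbo :: "'a bdbo_alg \<Rightarrow> ('v \<Rightarrow> 'a) \<Rightarrow> 'v bdbo_trm \<Rightarrow> 'a" where
  "eval_bdbo B v (CVar x) = v x"
| "eval_bdbo B v (CMeet s t) = meet B (eval_bdbo B v s) (eval_bdbo B v t)"
| "eval_bdbo B v (CJoin s t) = join B (eval_bdbo B v s) (eval_bdbo B v t)"
| "eval_bdbo B v (CCirc s t) = circ B (eval_bdbo B v s) (eval_bdbo B v t)"
| "eval_bdbo B v CZero = zero B"
| "eval_bdbo B v COne = one B"

fun holds :: "('a, 'b) bdl_scheme \<Rightarrow> ('t \<Rightarrow> 'a) \<Rightarrow> 't qf \<Rightarrow> bool" where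
  "holds L ev (FEq s t) = (ev s = ev t)"
| "holds L ev (FLe s t) = lle L (ev s) (ev t)"
| "holds L ev (FNot p) = (\<not> holds L ev p)"
| "holds L ev (FAnd p q) = (holds L ev p \<and> holds L ev q)"
| "holds L ev (FOr p q) = (holds L ev p \<or> holds L ev q)"

definition sat_in_bdo :: "'a bdo_alg \<Rightarrow> 'v bdo_trm qf \<Rightarrow> bool" where
  "sat_in_bdo A \<phi> \<longleftrightarrow> (\<exists>v. (\<forall>x. v x \<in> carrier A) \<and> holds A (eval_bdo A v) \<phi>)"

definition sat_in_bdbo :: "'a bdbo_alg \<Rightarrow> 'v bdbo_trm qf \<Rightarrow> bool" where
  "sat_in_bdbo B \<phi> \<longleftrightarrow> (\<exists>v. (\<forall>x. v x \<in> carrier B) \<and> holds B (eval_bdbo B v) \<phi>)"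

end

theory Submission
  imports Defs
begin

text \<open>A bdbo yields a bdo on the same lattice via \<open>\<Diamond>x := x \<circ> 1\<close>. Conversely, a bdo
  yields a bdbo via \<open>x \<circ> y := \<Diamond>x\<close> for \<open>y \<noteq> 0\<close> and \<open>x \<circ> 0 := 0\<close>; additivity in the second
  argument holds because \<open>y \<or> z = 0\<close> forces \<open>y = z = 0\<close>, and \<open>x \<circ> 1 = \<Diamond>x\<close> (when \<open>1 = 0\<close> the
  lattice is trivial). Both constructions keep the lattice, hence the order, so a valuation
  satisfying one formula satisfies the other.\<close>

lemma holds_map_qf:
  assumes "join L = join L'" "\<And>t. ev (f t) = ev' t"
  shows "holds L ev (map_qf f \<phi>) = holds L' ev' \<phi>"
  using assms by (induction \<phi>) (auto simp: lle_def)

lemma bdl_meet_zero_left: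
  assumes "is_bdl L" "y \<in> carrier L"
  shows "meet L (zero L) y = zero L"
proof -
  have "meet L (zero L) (join L (zero L) y) = zero L" "join L (zero L) y = y"
    using assms unfolding is_bdl_def by blast+
  then show ?thesis by simp
qed

lemma bdl_join_zero_right:
  assumes "is_bdl L" "y \<in> carrier L"
  shows "join L y (zero L) = y"
proof -
  have "join L y (zero L) = join L (zero L) y" "join L (zero L) y = y"
    using assms unfolding is_bdl_def by blast+
  then show ?thesis by simp
qed

lemma bdl_join_idem:
  assumes "is_bdl L" "x \<in> carrier L"
  shows "join L x x = x"
proof -
  have "meet L x (join L x x) = x" "join L x (meet L x (join L x x)) = x"
    using assms unfolding is_bdl_def by blast+
  then show ?thesis by simp
qed

lemma bdl_join_eq_zero_left:
  assumes "is_bdl L" "y \<in> carrier L" "z \<in> carrier L" "join L y z = zero L"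
  shows "y = zero L"
proof -
  have "meet L y (join L y z) = y" "meet L y (zero L) = meet L (zero L) y"
    using assms unfolding is_bdl_def by blast+
  then show ?thesis using bdl_meet_zero_left[OF assms(1,2)] assms(4) by simp
qed

lemma bdl_join_eq_zero_iff:
  assumes "is_bdl L" "y \<in> carrier L" "z \<in> carrier L"
  shows "join L y z = zero L \<longleftrightarrow> y = zero L \<and> z = zero L"
proof
  assume yz: "join L y z = zero L"
  moreover have "join L z y = join L y z" using assms unfolding is_bdl_def by blast
  ultimately have "join L z y = zero L" by simp
  with yz show "y = zero L \<and> z = zero L"
    using bdl_join_eq_zero_left[OF assms(1,2,3)] bdl_join_eq_zero_left[OF assms(1,3,2)] by blast
next
  assume "y = zero L \<and> z = zero L"
  then show "join L y z = zero L" using bdl_join_idem[OF assms(1)] assms(2) by simp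
qed

lemma bdl_eq_zero_if_one_eq_zero:
  assumes "is_bdl L" "one L = zero L" "x \<in> carrier L"
  shows "x = zero L"
proof -
  have "meet L (one L) x = x" using assms unfolding is_bdl_def by blast
  then show ?thesis using bdl_meet_zero_left[OF assms(1,3)] assms(2) by simp
qed

definition bdo_of_bdbo :: "'a bdbo_alg \<Rightarrow> 'a bdo_alg" where
  "bdo_of_bdbo B = \<lparr>carrier = carrier B, meet = meet B, join = join B, zero = zero B,
     one = one B, dia = (\<lambda>x. circ B x (one B))\<rparr>"

definition bdbo_of_bdo :: "'a bdo_alg \<Rightarrow> 'a bdbo_alg" where
  "bdbo_of_bdo A = \<lparr>carrier = carrier A, meet = meet A, join = join A, zero = zero A,
     one = one A, circ = (\<lambda>x y. if y = zero A then zero A else dia A x)\<rparr>"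

lemma is_bdl_bdo_of_bdbo: "is_bdl (bdo_of_bdbo B) = is_bdl B"
  by (simp add: is_bdl_def bdo_of_bdbo_def)

lemma is_bdl_bdbo_of_bdo: "is_bdl (bdbo_of_bdo A) = is_bdl A"
  by (simp add: is_bdl_def bdbo_of_bdo_def)

lemma is_bdo_bdo_of_bdbo:
  assumes "is_bdbo B"
  shows "is_bdo (bdo_of_bdbo B)"
proof -
  have "is_bdl B" "one B \<in> carrier B"
    "\<forall>x\<in>carrier B. \<forall>y\<in>carrier B. circ B x y \<in> carrier B"
    "\<forall>x\<in>carrier B. circ B (zero B) x = zero B"
    "\<forall>x\<in>carrier B. \<forall>y\<in>carrier B. \<forall>z\<in>carrier B.
        circ B (join B y z) x = join B (circ B y x) (circ B z x)"
    using assms unfolding is_bdbo_def is_bdl_def by blast+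
  then show ?thesis
    unfolding is_bdo_def is_bdl_bdo_of_bdbo by (simp add: bdo_of_bdbo_def)
qed

lemma is_bdbo_bdbo_of_bdo:
  assumes "is_bdo A"
  shows "is_bdbo (bdbo_of_bdo A)"
proof -
  have L: "is_bdl A" and zero_in: "zero A \<in> carrier A"
    and dia_closed: "\<And>x. x \<in> carrier A \<Longrightarrow> dia A x \<in> carrier A"
    and dia_zero: "dia A (zero A) = zero A"
    and dia_join: "\<And>y z. y \<in> carrier A \<Longrightarrow> z \<in> carrier A \<Longrightarrow>
                            dia A (join A y z) = join A (dia A y) (dia A z)"
    using assms unfolding is_bdo_def is_bdl_def by blast+
  have join_zero_left: "\<And>y. y \<in> carrier A \<Longrightarrow> join A (zero A) y = y"
    using L unfolding is_bdl_def by blast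
  let ?c = "circ (bdbo_of_bdo A)"
  have "?c x (join A y z) = join A (?c x y) (?c x z)"
    if "x \<in> carrier A" "y \<in> carrier A" "z \<in> carrier A" for x y z
    using that zero_in dia_closed[OF that(1)] bdl_join_eq_zero_iff[OF L that(2,3)]
      bdl_join_idem[OF L] bdl_join_zero_right[OF L] join_zero_left
    by (simp add: bdbo_of_bdo_def)
  moreover have "?c (join A y z) x = join A (?c y x) (?c z x)"
    if "y \<in> carrier A" "z \<in> carrier A" for x y z
    using dia_join[OF that] bdl_join_idem[OF L zero_in] by (simp add: bdbo_of_bdo_def)
  ultimately show ?thesis
    using L dia_closed zero_in dia_zero unfolding is_bdbo_def is_bdl_bdbo_of_bdo
    by (simp add: bdbo_of_bdo_def)
qed

lemma eval_bdo_in_carrier: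
  assumes "is_bdo A" "\<forall>x. v x \<in> carrier A"
  shows "eval_bdo A v t \<in> carrier A"
proof -
  have "zero A \<in> carrier A" "one A \<in> carrier A"
    "\<forall>x\<in>carrier A. \<forall>y\<in>carrier A. meet A x y \<in> carrier A \<and> join A x y \<in> carrier A"
    "\<forall>x\<in>carrier A. dia A x \<in> carrier A"
    using assms(1) unfolding is_bdo_def is_bdl_def by blast+
  then show ?thesis using assms(2) by (induction t) auto
qed

lemma circ_bdbo_of_bdo_one:
  assumes "is_bdo A" "x \<in> carrier A"
  shows "circ (bdbo_of_bdo A) x (one (bdbo_of_bdo A)) = dia A x"
proof (cases "one A = zero A")
  case True
  with assms have "x = zero A" using bdl_eq_zero_if_one_eq_zero by (auto simp: is_bdo_def)
  with True assms show ?thesis by (simp add: bdbo_of_bdo_def is_bdo_def)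
qed (simp add: bdbo_of_bdo_def)

lemma eval_bdbo_of_bdo_trans_trm:
  assumes "is_bdo A" "\<forall>x. v x \<in> carrier A"
  shows "eval_bdbo (bdbo_of_bdo A) v (trans_trm t) = eval_bdo A v t"
proof (induction t)
  case (BDia t)
  then show ?case
    using circ_bdbo_of_bdo_one[OF assms(1) eval_bdo_in_carrier[OF assms]] by simp
qed (simp_all add: bdbo_of_bdo_def)

lemma eval_bdo_of_bdbo:
  "eval_bdo (bdo_of_bdbo B) v t = eval_bdbo B v (trans_trm t)"
  by (induction t) (simp_all add: bdo_of_bdbo_def)

lemma sat_in_bdbo_of_bdo:
  assumes "is_bdo A" "sat_in_bdo A \<phi>"
  shows "sat_in_bdbo (bdbo_of_bdo A) (trans_fm \<phi>)"
proof -
  obtain v where v: "\<forall>x. v x \<in> carrier A" "holds A (eval_bdo A v) \<phi>"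
    using assms(2) by (auto simp: sat_in_bdo_def)
  have "holds (bdbo_of_bdo A) (eval_bdbo (bdbo_of_bdo A) v) (trans_fm \<phi>)"
    unfolding trans_fm_def
    using v eval_bdbo_of_bdo_trans_trm[OF assms(1) v(1)]
    by (subst holds_map_qf[where L' = A and ev' = "eval_bdo A v"]) (auto simp: bdbo_of_bdo_def)
  then show ?thesis using v(1) by (auto simp: sat_in_bdbo_def bdbo_of_bdo_def)
qed

lemma sat_in_bdo_of_bdbo:
  assumes "sat_in_bdbo B (trans_fm \<phi>)"
  shows "sat_in_bdo (bdo_of_bdbo B) \<phi>"
proof -
  obtain v where v: "\<forall>x. v x \<in> carrier B" "holds B (eval_bdbo B v) (trans_fm \<phi>)"
    using assms by (auto simp: sat_in_bdbo_def)
  have "holds (bdo_of_bdbo B) (eval_bdo (bdo_of_bdbo B) v) \<phi>"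
    using v(2) unfolding trans_fm_def eval_bdo_of_bdbo
    by (subst (asm) holds_map_qf[where L' = "bdo_of_bdbo B"]) (simp_all add: bdo_of_bdbo_def)
  then show ?thesis using v(1) by (auto simp: sat_in_bdo_def bdo_of_bdbo_def)
qed

theorem lemma5p4:
  fixes \<phi> :: "'v bdo_trm qf"
  shows "(\<exists>A :: 'a bdo_alg. is_bdo A \<and> sat_in_bdo A \<phi>) \<longleftrightarrow>
         (\<exists>B :: 'a bdbo_alg. is_bdbo B \<and> sat_in_bdbo B (trans_fm \<phi>))"
  using is_bdbo_bdbo_of_bdo sat_in_bdbo_of_bdo is_bdo_bdo_of_bdbo sat_in_bdo_of_bdbo
  by blast

end
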